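(* Let $\theta:\mathbb{R}^n\to\mathbb{R}^K$, $x^\star\in\mathbb{R}^n$, $u\in\mathbb{R}^n$, a matrix $J\in\mathbb{R}^{K\times n}$ and a class index $k^\star\in\{1,\dots,K\}$ be such that $\theta(x^\star+\alpha u)-\theta(x^\star)=\alpha Ju$ for all $\alpha>0$. Set $\tilde{x}=x^\star+\alpha u$ and $\Delta\ell(\alpha)=\ell(\tilde{x},\bm{e}_{k^\star};\theta)-\ell(x^\star,\bm{e}_{k^\star};\theta)$. If $\ell=\ell_{CE}$ is the cross-entropy loss, then $$\lim_{\alpha\to\infty}\frac{\Delta\ell_{CE}(\alpha)}{\alpha}=\max_i(Ju)_i-(Ju)_{k^\star}.$$ If $\ell=\ell_{DLR}$ is the DLR loss, then $$\lim_{\alpha\to\infty}\frac{\Delta\ell_{DLR}(\alpha)}{\alpha}=\max_{i\neq k^\star}(Ju)_i-(Ju)_{k^\star}.$$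
   Context: $\bm{e}_k$ is the $k$-th standard basis vector of $\mathbb{R}^K$. Cross-entropy loss: $\ell_{CE}(x,\bm{e}_k;\theta)=-\log\operatorname{softmax}(\theta(x))_k=-\theta(x)_k+\log\sum_{j}e^{\theta(x)_j}$. DLR loss (as used in the paper): $\ell_{DLR}(x,\bm{e}_k;\theta)=\max_{j\neq k}\theta(x)_j-\theta(x)_k$. In the paper this lemma is applied with $J=J_{\bm{D}^\star}$ the constant Jacobian of a ReLU network on an activation cell and $u=u^\star_t$ a direction in the recession cone of that cell, which guarantees the stated affine relation. *)

theory Defs
  imports "HOL-Analysis.Analysis"
begin

text \<open>Cross-entropy loss with one-hot label e_k:
  -log softmax(theta x)_k = -theta(x)_k + log sum_j exp(theta(x)_j).\<close>
definition ce_loss :: "(real^'n \<Rightarrow> real^'k::finite) \<Rightarrow> real^'n \<Rightarrow> 'k \<Rightarrow> real" where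
  "ce_loss \<theta> x k = - (\<theta> x $ k) + ln (\<Sum>j\<in>UNIV. exp (\<theta> x $ j))"

definition dlr_loss :: "(real^'n \<Rightarrow> real^'k::finite) \<Rightarrow> real^'n \<Rightarrow> 'k \<Rightarrow> real" where
  "dlr_loss \<theta> x k = Max {\<theta> x $ j | j. j \<noteq> k} - \<theta> x $ k"

end

theory Submission
  imports Defs
begin

text \<open>Along the ray the logits are affine, \<open>\<theta> (x + \<alpha> u) = \<theta> x + \<alpha> v\<close>. Both losses are built
  from a maximum-like function of the logits (the log-sum-exp for cross entropy, a plain
  maximum over the wrong classes for DLR), and such a function of \<open>\<theta> x + \<alpha> v\<close> differs from
  \<open>\<alpha>\<close> times the maximum of \<open>v\<close> by a quantity bounded independently of \<open>\<alpha>\<close>: the maximum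
  moves by at most \<open>\<parallel>\<theta> x\<parallel>\<close> and the log-sum-exp exceeds the maximum by at most
  \<open>ln K\<close>. Dividing a bounded error by \<open>\<alpha>\<close> gives the limits.\<close>

lemma tendsto_slope_at_top_of_bounded_deviation:
  fixes f :: "real \<Rightarrow> real"
  assumes "\<And>a. a > 0 \<Longrightarrow> \<bar>f a - a * c\<bar> \<le> B"
  shows "((\<lambda>a. f a / a) \<longlongrightarrow> c) at_top"
proof -
  have "((\<lambda>a. f a / a - c) \<longlongrightarrow> 0) at_top"
  proof (rule Lim_null_comparison)
    show "\<forall>\<^sub>F a in at_top. norm (f a / a - c) \<le> B / a"
      using eventually_gt_at_top[of 0]
    proof eventually_elim
      case (elim a)
      have "f a / a - c = (f a - a * c) / a" using elim by (simp add: field_simps)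
      then show ?case using assms[OF elim] elim by (simp add: abs_divide divide_right_mono)
    qed
    show "((\<lambda>a. B / a) \<longlongrightarrow> 0) at_top"
      by (intro tendsto_divide_0[OF tendsto_const] filterlim_at_top_imp_at_infinity[OF filterlim_ident])
  qed
  then show ?thesis by (simp add: LIM_zero_cancel)
qed

lemma Max_image_le_Max_image_add:
  fixes f g :: "'a \<Rightarrow> 'b::linordered_ab_group_add"
  assumes "finite I" "I \<noteq> {}" "\<And>i. i \<in> I \<Longrightarrow> f i \<le> g i + B"
  shows "Max (f ` I) \<le> Max (g ` I) + B"
proof -
  have "f i \<le> Max (g ` I) + B" if "i \<in> I" for i
  proof -
    have "g i \<le> Max (g ` I)"
      using assms(1) that by simp
    then show ?thesis
      using assms(3)[OF that] by (metis add_right_mono order_trans)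
  qed
  then show ?thesis
    using assms(1,2) by simp
qed

lemma abs_Max_image_diff_le:
  fixes f g :: "'a \<Rightarrow> real"
  assumes "finite I" "I \<noteq> {}" "\<And>i. i \<in> I \<Longrightarrow> \<bar>f i - g i\<bar> \<le> B"
  shows "\<bar>Max (f ` I) - Max (g ` I)\<bar> \<le> B"
proof -
  have "f i \<le> g i + B" "g i \<le> f i + B" if "i \<in> I" for i
    using assms(3)[OF that] by linarith+
  then have "Max (f ` I) \<le> Max (g ` I) + B" "Max (g ` I) \<le> Max (f ` I) + B"
    using assms(1,2) by (blast intro: Max_image_le_Max_image_add)+
  then show ?thesis
    by linarith
qed

lemma Max_image_mult_left:
  fixes v :: "'a \<Rightarrow> real"
  assumes "finite I" "I \<noteq> {}" "a \<ge> 0"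
  shows "Max ((\<lambda>i. a * v i) ` I) = a * Max (v ` I)"
proof -
  have "mono ((*) a)" using assms(3) by (simp add: mono_def mult_left_mono)
  then show ?thesis
    using mono_Max_commute[of "(*) a" "v ` I"] assms by (simp add: image_image)
qed

lemma abs_Max_image_affine_diff_le:
  fixes t v :: "'a \<Rightarrow> real"
  assumes "finite I" "I \<noteq> {}" "a \<ge> 0" "\<And>i. i \<in> I \<Longrightarrow> \<bar>t i\<bar> \<le> T"
  shows "\<bar>Max ((\<lambda>i. t i + a * v i) ` I) - a * Max (v ` I)\<bar> \<le> T"
  using abs_Max_image_diff_le[of I "\<lambda>i. t i + a * v i" "\<lambda>i. a * v i" T] assms
  by (simp add: Max_image_mult_left)

lemma Max_image_le_ln_sum_exp:
  fixes x :: "'a \<Rightarrow> real"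
  assumes "finite I" "I \<noteq> {}"
  shows "Max (x ` I) \<le> ln (\<Sum>i\<in>I. exp (x i))"
proof -
  have "Max (x ` I) \<in> x ` I"
    using assms by (intro Max_in) auto
  then obtain i where i: "i \<in> I" "Max (x ` I) = x i"
    by blast
  have "exp (x i) \<le> (\<Sum>i\<in>I. exp (x i))"
    using assms(1) i(1) by (intro member_le_sum) auto
  then show ?thesis
    using i(2) by (metis exp_gt_zero exp_le_cancel_iff exp_ln order.strict_trans2)
qed

lemma ln_sum_exp_le_Max_image:
  fixes x :: "'a \<Rightarrow> real"
  assumes "finite I" "I \<noteq> {}"
  shows "ln (\<Sum>i\<in>I. exp (x i)) \<le> Max (x ` I) + ln (card I)"
proof -
  have "(\<Sum>i\<in>I. exp (x i)) \<le> card I * exp (Max (x ` I))"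
    using assms by (intro sum_bounded_above) simp
  moreover have "(\<Sum>i\<in>I. exp (x i)) > 0"
    using assms by (intro sum_pos) auto
  moreover have "card I > 0"
    using assms by (simp add: card_gt_0_iff)
  ultimately have "ln (\<Sum>i\<in>I. exp (x i)) \<le> ln (card I * exp (Max (x ` I)))"
    by simp
  also have "\<dots> = Max (x ` I) + ln (card I)"
    using \<open>card I > 0\<close> by (simp add: ln_mult)
  finally show ?thesis .
qed

lemma abs_ln_sum_exp_affine_diff_le:
  fixes t v :: "'a \<Rightarrow> real"
  assumes "finite I" "I \<noteq> {}" "a \<ge> 0" "\<And>i. i \<in> I \<Longrightarrow> \<bar>t i\<bar> \<le> T"
  shows "\<bar>ln (\<Sum>i\<in>I. exp (t i + a * v i)) - a * Max (v ` I)\<bar> \<le> T + ln (card I)"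
proof -
  let ?M = "Max ((\<lambda>i. t i + a * v i) ` I)"
  have "\<bar>?M - a * Max (v ` I)\<bar> \<le> T"
    using assms by (rule abs_Max_image_affine_diff_le)
  moreover have "?M \<le> ln (\<Sum>i\<in>I. exp (t i + a * v i))"
    using assms(1,2) by (rule Max_image_le_ln_sum_exp)
  moreover have "ln (\<Sum>i\<in>I. exp (t i + a * v i)) \<le> ?M + ln (card I)"
    using assms(1,2) by (rule ln_sum_exp_le_Max_image)
  moreover have "ln (card I) \<ge> 0"
    using assms(1,2) by (simp add: Suc_leI card_gt_0_iff)
  ultimately show ?thesis
    by linarith
qed

lemma ce_loss_slope_tendsto:
  fixes \<theta> :: "real^'n \<Rightarrow> real^'k::finite"
  assumes ray: "\<And>a. a > 0 \<Longrightarrow> \<theta> (x + a *\<^sub>R u) = \<theta> x + a *\<^sub>R v"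
  shows "((\<lambda>a. (ce_loss \<theta> (x + a *\<^sub>R u) k - ce_loss \<theta> x k) / a)
           \<longlongrightarrow> Max {v $ i | i. True} - v $ k) at_top"
proof (rule tendsto_slope_at_top_of_bounded_deviation)
  fix a :: real
  assume "a > 0"
  let ?t = "\<theta> x" and ?T = "norm (\<theta> x)"
  have deviation: "ce_loss \<theta> (x + a *\<^sub>R u) k - ce_loss \<theta> x k - a * (Max {v $ i | i. True} - v $ k)
      = (ln (\<Sum>j\<in>UNIV. exp (?t $ j + a * v $ j)) - a * Max ((\<lambda>i. v $ i) ` UNIV))
        - ln (\<Sum>j\<in>UNIV. exp (?t $ j))"
    using ray[OF \<open>a > 0\<close>] by (simp add: ce_loss_def full_SetCompr_eq algebra_simps)
  have "\<bar>ln (\<Sum>j\<in>UNIV. exp (?t $ j + a * v $ j)) - a * Max ((\<lambda>i. v $ i) ` UNIV)\<bar>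
      \<le> ?T + ln CARD('k)"
    using \<open>a > 0\<close> by (intro abs_ln_sum_exp_affine_diff_le) (auto intro: component_le_norm_cart)
  then show "\<bar>ce_loss \<theta> (x + a *\<^sub>R u) k - ce_loss \<theta> x k - a * (Max {v $ i | i. True} - v $ k)\<bar>
      \<le> ?T + ln CARD('k) + \<bar>ln (\<Sum>j\<in>UNIV. exp (?t $ j))\<bar>"
    unfolding deviation by linarith
qed

lemma dlr_loss_slope_tendsto:
  fixes \<theta> :: "real^'n \<Rightarrow> real^'k::finite"
  assumes ray: "\<And>a. a > 0 \<Longrightarrow> \<theta> (x + a *\<^sub>R u) = \<theta> x + a *\<^sub>R v"
    and other_class: "\<exists>j. j \<noteq> k"
  shows "((\<lambda>a. (dlr_loss \<theta> (x + a *\<^sub>R u) k - dlr_loss \<theta> x k) / a)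
           \<longlongrightarrow> Max {v $ i | i. i \<noteq> k} - v $ k) at_top"
proof (rule tendsto_slope_at_top_of_bounded_deviation)
  fix a :: real
  assume "a > 0"
  let ?t = "\<theta> x" and ?T = "norm (\<theta> x)" and ?I = "{i. i \<noteq> k}"
  have deviation: "dlr_loss \<theta> (x + a *\<^sub>R u) k - dlr_loss \<theta> x k - a * (Max {v $ i | i. i \<noteq> k} - v $ k)
      = (Max ((\<lambda>j. ?t $ j + a * v $ j) ` ?I) - a * Max ((\<lambda>i. v $ i) ` ?I))
        - Max ((\<lambda>j. ?t $ j) ` ?I)"
    using ray[OF \<open>a > 0\<close>] by (simp add: dlr_loss_def image_Collect algebra_simps)
  have "?I \<noteq> {}"
    using other_class by auto
  then have "\<bar>Max ((\<lambda>j. ?t $ j + a * v $ j) ` ?I) - a * Max ((\<lambda>i. v $ i) ` ?I)\<bar> \<le> ?T"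
    using \<open>a > 0\<close> by (intro abs_Max_image_affine_diff_le) (auto intro: component_le_norm_cart)
  then show "\<bar>dlr_loss \<theta> (x + a *\<^sub>R u) k - dlr_loss \<theta> x k - a * (Max {v $ i | i. i \<noteq> k} - v $ k)\<bar>
      \<le> ?T + \<bar>Max ((\<lambda>j. ?t $ j) ` ?I)\<bar>"
    unfolding deviation by linarith
qed

lemma exists_other_if_card_ge_2:
  assumes "CARD('a::finite) \<ge> 2"
  shows "\<exists>j::'a. j \<noteq> k"
proof (rule ccontr)
  assume "\<nexists>j::'a. j \<noteq> k"
  then have "(UNIV :: 'a set) = {k}" by auto
  then have "CARD('a) = card {k}" by (rule arg_cong)
  then show False using assms by simp
qed

theorem lemma1:
  fixes \<theta> :: "real^'n \<Rightarrow> real^'k::finite"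
    and xs u :: "real^'n"
    and J :: "real^'n^'k"
    and ks :: 'k
  assumes affine: "\<And>\<alpha>::real. \<alpha> > 0 \<Longrightarrow> \<theta> (xs + \<alpha> *\<^sub>R u) - \<theta> xs = \<alpha> *\<^sub>R (J *v u)"
    and K2: "CARD('k) \<ge> 2"
  shows "((\<lambda>\<alpha>. (ce_loss \<theta> (xs + \<alpha> *\<^sub>R u) ks - ce_loss \<theta> xs ks) / \<alpha>)
            \<longlongrightarrow> Max {(J *v u) $ i | i. True} - (J *v u) $ ks) at_top \<and>
          ((\<lambda>\<alpha>. (dlr_loss \<theta> (xs + \<alpha> *\<^sub>R u) ks - dlr_loss \<theta> xs ks) / \<alpha>)
            \<longlongrightarrow> Max {(J *v u) $ i | i. i \<noteq> ks} - (J *v u) $ ks) at_top"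
proof -
  have ray: "\<theta> (xs + a *\<^sub>R u) = \<theta> xs + a *\<^sub>R (J *v u)" if "a > 0" for a
    using affine[OF that] by (simp add: algebra_simps)
  show ?thesis
    using ce_loss_slope_tendsto[OF ray] dlr_loss_slope_tendsto[OF ray exists_other_if_card_ge_2[OF K2]]
    by blast
qed

end
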